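(* Fix $n\in\mathbb N$, a diagonal matrix $D=\mathrm{diag}(d_1,\dots,d_n)$ with positive diagonal entries, and vectors $\mathbf v=(v_1,\dots,v_n)^\top$, $\mathbf c=(c_1,\dots,c_n)^\top\in\mathbb R^n$ such that $c_i\ne0$ for some $i\in\{1,\dots,n-1\}$. Set $\mathbf 1_A=1$ if $v_n-\frac{\mathbf c^\top D^{-1}\mathbf v}{\mathbf c^\top D^{-1}\mathbf c}c_n<0$ and $\mathbf 1_A=0$ otherwise, and define $$\lambda^*=\frac{\mathbf c^\top D^{-1}\mathbf v-c_nv_nd_n^{-1}\mathbf 1_A}{\mathbf c^\top D^{-1}\mathbf c-c_n^2d_n^{-1}\mathbf 1_A},\qquad\mu^*=(v_n-\lambda^*c_n)^-,\qquad\mathbf z^*=D^{-1}(\mathbf v-\lambda^*\mathbf c+\mu^*\mathbf e_n).$$ (a) $\mathbf z^*$ is the unique optimiser of the primal problem: minimise $\frac12\mathbf z^\top D\mathbf z-\mathbf v^\top\mathbf z$ subject to $\mathbf z\in\mathbb R^n$, $\mathbf c^\top\mathbf z=0$, $z_n\ge0$; and $\|\mathbf z^*\|\le d_{\min}^{-1}\|\mathbf v\|$, where $d_{\min}=\min(d_1,\dots,d_n)$. (b) $(\lambda^*,\mu^* )$ is the unique optimiser of the dual problem of this primal problem, which can be written as: maximise $-\frac12(\mathbf v-\lambda\mathbf c+\mu\mathbf e_n)^\top D^{-1}(\mathbf v-\lambda\mathbf c+\mu\mathbf e_n)$ subject to $\lambda\in\mathbb R$, $\mu\ge0$. Moreover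 $\|\lambda^*\mathbf c-\mu^*\mathbf e_n\|\le(1+\frac{d_{\max}}{d_{\min}})\|\mathbf v\|$, where $d_{\max}=\max(d_1,\dots,d_n)$. (c) The optimal values of the primal and dual problems coincide (no duality gap) and equal $-\frac12\mathbf v^\top\mathbf z^*$. (d) The triple satisfies $\mathbf z^*=\arg\min_{\mathbf z\in\mathbb R^n}L(\mathbf z,\lambda^*,\mu^* )$, $\mathbf c^\top\mathbf z^*=0$, $z^*_n\ge0$, $\mu^*\ge0$, $\mu^*z^*_n=0$, where $L$ is the Lagrangian of the primal problem; moreover $(\lambda^*,\mu^* )$ is a Lagrange multiplier for the primal problem.
   Context: $\mathbf e_n$ denotes the $n$-th unit vector, $\|\cdot\|$ the Euclidean norm, and $x^-=\max(-x,0)$. For a primal problem "minimise $f(\mathbf z)$ subject to $\mathbf z\in\mathbb R^n$, $h(\mathbf z)=0$, $g(\mathbf z)\le0$" with optimal value $f^*$, the Lagrangian is $L(\mathbf z,\lambda,\mu)=f(\mathbf z)+\lambda h(\mathbf z)+\mu g(\mathbf z)$; a pair $(\lambda^*,\mu^* )$ is a Lagrange multiplier if $f^*=\inf_{\mathbf z\in\mathbb R^n}L(\mathbf z,\lambda^*,\mu^* )$ and $\mu^*\ge0$; the dual problem is "maximise $q(\lambda,\mu)=\inf_{\mathbf z\in\mathbb R^n}L(\mathbf z,\lambda,\mu)$ subject to $\lambda\in\mathbb R$, $\mu\ge0$". Here $f(\mathbf z)=\frac12\mathbf z^\top D\mathbf z-\mathbf v^\top\mathbf z$, $h(\mathbf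 z)=\mathbf c^\top\mathbf z$, $g(\mathbf z)=-z_n$, so $L(\mathbf z,\lambda,\mu)=\frac12\mathbf z^\top D\mathbf z-\mathbf v^\top\mathbf z+\lambda\mathbf c^\top\mathbf z-\mu\mathbf e_n^\top\mathbf z$. *)

theory Defs
  imports Complex_Main
begin

text \<open>Vectors of R^n are represented as functions nat => real with coordinates
  indexed by 1..n and vanishing outside {1..n}.  The diagonal matrix D is
  represented by its diagonal d.\<close>

definition Rn :: "nat \<Rightarrow> (nat \<Rightarrow> real) set" where
  "Rn n = {z. \<forall>i. i \<notin> {1..n} \<longrightarrow> z i = 0}"

definition unitv :: "nat \<Rightarrow> nat \<Rightarrow> real" where
  "unitv n i = (if i = n then 1 else 0)"

definition dotp :: "nat \<Rightarrow> (nat \<Rightarrow> real) \<Rightarrow> (nat \<Rightarrow> real) \<Rightarrow> real" where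
  "dotp n x y = (\<Sum>i=1..n. x i * y i)"

definition vnorm :: "nat \<Rightarrow> (nat \<Rightarrow> real) \<Rightarrow> real" where
  "vnorm n x = sqrt (dotp n x x)"

definition quadD :: "nat \<Rightarrow> (nat \<Rightarrow> real) \<Rightarrow> (nat \<Rightarrow> real) \<Rightarrow> (nat \<Rightarrow> real) \<Rightarrow> real" where
  "quadD n d x y = (\<Sum>i=1..n. x i * d i * y i)"

definition quadDinv :: "nat \<Rightarrow> (nat \<Rightarrow> real) \<Rightarrow> (nat \<Rightarrow> real) \<Rightarrow> (nat \<Rightarrow> real) \<Rightarrow> real" where
  "quadDinv n d x y = (\<Sum>i=1..n. x i * y i / d i)"

definition negpart :: "real \<Rightarrow> real" where
  "negpart x = max (- x) 0"

definition objf :: "nat \<Rightarrow> (nat \<Rightarrow> real) \<Rightarrow> (nat \<Rightarrow> real) \<Rightarrow> (nat \<Rightarrow> real) \<Rightarrow> real" where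
  "objf n d v z = 1/2 * quadD n d z z - dotp n v z"

definition feasible :: "nat \<Rightarrow> (nat \<Rightarrow> real) \<Rightarrow> (nat \<Rightarrow> real) set" where
  "feasible n c = {z \<in> Rn n. dotp n c z = 0 \<and> z n \<ge> 0}"

definition lagr :: "nat \<Rightarrow> (nat \<Rightarrow> real) \<Rightarrow> (nat \<Rightarrow> real) \<Rightarrow> (nat \<Rightarrow> real) \<Rightarrow> (nat \<Rightarrow> real) \<Rightarrow> real \<Rightarrow> real \<Rightarrow> real" where
  "lagr n d v c z lam mu = objf n d v z + lam * dotp n c z - mu * dotp n (unitv n) z"

definition dualfun :: "nat \<Rightarrow> (nat \<Rightarrow> real) \<Rightarrow> (nat \<Rightarrow> real) \<Rightarrow> (nat \<Rightarrow> real) \<Rightarrow> real \<Rightarrow> real \<Rightarrow> real" where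
  "dualfun n d v c lam mu = (INF z\<in>Rn n. lagr n d v c z lam mu)"

definition primal_value :: "nat \<Rightarrow> (nat \<Rightarrow> real) \<Rightarrow> (nat \<Rightarrow> real) \<Rightarrow> (nat \<Rightarrow> real) \<Rightarrow> real" where
  "primal_value n d v c = (INF z\<in>feasible n c. objf n d v z)"

definition dual_value :: "nat \<Rightarrow> (nat \<Rightarrow> real) \<Rightarrow> (nat \<Rightarrow> real) \<Rightarrow> (nat \<Rightarrow> real) \<Rightarrow> real" where
  "dual_value n d v c = (SUP p\<in>{p :: real \<times> real. snd p \<ge> 0}. dualfun n d v c (fst p) (snd p))"

definition ind_A :: "nat \<Rightarrow> (nat \<Rightarrow> real) \<Rightarrow> (nat \<Rightarrow> real) \<Rightarrow> (nat \<Rightarrow> real) \<Rightarrow> real" where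
  "ind_A n d v c =
     (if v n - quadDinv n d c v / quadDinv n d c c * c n < 0 then 1 else 0)"

definition lam_star :: "nat \<Rightarrow> (nat \<Rightarrow> real) \<Rightarrow> (nat \<Rightarrow> real) \<Rightarrow> (nat \<Rightarrow> real) \<Rightarrow> real" where
  "lam_star n d v c =
     (quadDinv n d c v - c n * v n / d n * ind_A n d v c) /
     (quadDinv n d c c - (c n)^2 / d n * ind_A n d v c)"

definition mu_star :: "nat \<Rightarrow> (nat \<Rightarrow> real) \<Rightarrow> (nat \<Rightarrow> real) \<Rightarrow> (nat \<Rightarrow> real) \<Rightarrow> real" where
  "mu_star n d v c = negpart (v n - lam_star n d v c * c n)"

definition z_star :: "nat \<Rightarrow> (nat \<Rightarrow> real) \<Rightarrow> (nat \<Rightarrow> real) \<Rightarrow> (nat \<Rightarrow> real) \<Rightarrow> nat \<Rightarrow> real" where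
  "z_star n d v c i = (if i \<in> {1..n} then
     (v i - lam_star n d v c * c i + mu_star n d v c * unitv n i) / d i else 0)"

end

theory Submission
  imports Defs "HOL-Analysis.L2_Norm"
begin

text \<open>Completing the square, the Lagrangian is
  \<open>L(z,\<lambda>,\<mu>) = -\<onehalf> w\<^sup>T D\<^sup>-\<^sup>1 w + \<onehalf> (z - D\<^sup>-\<^sup>1 w)\<^sup>T D (z - D\<^sup>-\<^sup>1 w)\<close> with
  \<open>w = v - \<lambda> c + \<mu> e\<^sub>n\<close>, so it has the unique minimiser \<open>D\<^sup>-\<^sup>1 w\<close> and the dual function is
  \<open>-\<onehalf> w\<^sup>T D\<^sup>-\<^sup>1 w\<close>. The choice of \<open>\<lambda>*\<close> and \<open>\<mu>*\<close> makes \<open>z* = D\<^sup>-\<^sup>1 w\<close> satisfy the KKT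
  conditions; the indicator distinguishes whether the constraint \<open>z\<^sub>n \<ge> 0\<close> is active.
  Weak duality then makes \<open>z*\<close> the strict primal minimiser and \<open>(\<lambda>*,\<mu>*)\<close> the strict
  dual maximiser, the latter because \<open>(\<lambda>,\<mu>) \<mapsto> D\<^sup>-\<^sup>1 w\<close> is injective once some \<open>c\<^sub>i\<close>
  with \<open>i < n\<close> is nonzero. The norm bounds come from \<open>z*\<^sup>T D z* = v\<^sup>T z*\<close> and
  \<open>\<lambda>* c - \<mu>* e\<^sub>n = v - D z*\<close>.\<close>

lemma cINF_eq_strict_minimum:
  fixes f :: "'a \<Rightarrow> 'b::conditionally_complete_linorder"
  assumes "a \<in> A" and "\<And>x. x \<in> A \<Longrightarrow> x \<noteq> a \<Longrightarrow> f a < f x"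
  shows "(INF x\<in>A. f x) = f a"
proof (rule cInf_eq_minimum)
  fix y assume "y \<in> f ` A"
  then obtain x where "x \<in> A" "y = f x" by blast
  then show "f a \<le> y" using assms(2)[of x] by (cases "x = a") auto
qed (use assms(1) in blast)

lemma cSUP_eq_strict_maximum:
  fixes f :: "'a \<Rightarrow> 'b::conditionally_complete_linorder"
  assumes "a \<in> A" and "\<And>x. x \<in> A \<Longrightarrow> x \<noteq> a \<Longrightarrow> f x < f a"
  shows "(SUP x\<in>A. f x) = f a"
proof (rule cSup_eq_maximum)
  fix y assume "y \<in> f ` A"
  then obtain x where "x \<in> A" "y = f x" by blast
  then show "y \<le> f a" using assms(2)[of x] by (cases "x = a") auto
qed (use assms(1) in blast)

definition dinv :: "nat \<Rightarrow> (nat \<Rightarrow> real) \<Rightarrow> (nat \<Rightarrow> real) \<Rightarrow> nat \<Rightarrow> real" where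
  "dinv n d w = (\<lambda>i. if i \<in> {1..n} then w i / d i else 0)"

definition lagr_coeff :: "nat \<Rightarrow> (nat \<Rightarrow> real) \<Rightarrow> (nat \<Rightarrow> real) \<Rightarrow> real \<Rightarrow> real \<Rightarrow> nat \<Rightarrow> real" where
  "lagr_coeff n v c lam mu = (\<lambda>i. v i - lam * c i + mu * unitv n i)"

lemma dinv_Rn: "dinv n d w \<in> Rn n"
  by (simp add: Rn_def dinv_def)

lemma dotp_unitv: "1 \<le> n \<Longrightarrow> dotp n (unitv n) z = z n"
  unfolding dotp_def unitv_def by (simp add: if_distrib[of "\<lambda>x. x * _"] cong: if_cong)

lemma quadDinv_unitv: "1 \<le> n \<Longrightarrow> quadDinv n d c (unitv n) = c n / d n"
  unfolding quadDinv_def unitv_def by (simp add: if_distrib[of "\<lambda>x. c _ * x / _"] cong: if_cong)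

lemma dotp_lagr_coeff:
  assumes "1 \<le> n"
  shows "dotp n (lagr_coeff n v c lam mu) z = dotp n v z - lam * dotp n c z + mu * z n"
proof -
  have "dotp n (lagr_coeff n v c lam mu) z = dotp n v z - lam * dotp n c z + mu * dotp n (unitv n) z"
    by (simp add: lagr_coeff_def dotp_def algebra_simps sum.distrib sum_subtractf sum_distrib_left)
  then show ?thesis by (simp add: dotp_unitv[OF assms])
qed

lemma lagr_eq: "lagr n d v c z lam mu = 1/2 * quadD n d z z - dotp n (lagr_coeff n v c lam mu) z"
  by (simp add: lagr_def objf_def lagr_coeff_def dotp_def algebra_simps sum.distrib
      sum_subtractf sum_distrib_left)

lemma lagr_eq_objf: "1 \<le> n \<Longrightarrow> lagr n d v c z lam mu = objf n d v z + lam * dotp n c z - mu * z n"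
  by (simp add: lagr_def dotp_unitv)

lemma quadDinv_lagr_coeff:
  assumes "1 \<le> n"
  shows "quadDinv n d c (lagr_coeff n v c lam mu)
     = quadDinv n d c v - lam * quadDinv n d c c + mu * c n / d n"
proof -
  have "quadDinv n d c (lagr_coeff n v c lam mu)
      = quadDinv n d c v - lam * quadDinv n d c c + mu * quadDinv n d c (unitv n)"
    by (simp add: lagr_coeff_def quadDinv_def algebra_simps sum.distrib sum_subtractf
        sum_distrib_left add_divide_distrib diff_divide_distrib)
  then show ?thesis by (simp add: quadDinv_unitv[OF assms])
qed

lemma z_star_eq_dinv: "z_star n d v c = dinv n d (lagr_coeff n v c (lam_star n d v c) (mu_star n d v c))"
  by (simp add: z_star_def dinv_def lagr_coeff_def fun_eq_iff)

lemma mu_star_nonneg: "0 \<le> mu_star n d v c"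
  by (simp add: mu_star_def negpart_def)

lemma quadD_self: "quadD n d x x = (\<Sum>i=1..n. d i * (x i)^2)"
  by (simp add: quadD_def power2_eq_square ac_simps)

lemma vnorm_L2: "vnorm n x = L2_set x {1..n}"
  by (simp add: vnorm_def dotp_def L2_set_def power2_eq_square)

lemma vnorm_le_of_quadD_le:
  assumes "0 < m" "\<forall>i\<in>{1..n}. m \<le> d i" and "quadD n d z z \<le> dotp n v z"
  shows "vnorm n z \<le> vnorm n v / m"
proof -
  have "m * vnorm n z ^ 2 = (\<Sum>i=1..n. m * (z i * z i))"
    by (simp add: vnorm_def dotp_def sum_nonneg sum_distrib_left)
  also have "\<dots> \<le> quadD n d z z"
    unfolding quadD_def using assms(2) by (intro sum_mono) (simp add: mult_right_mono ac_simps)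
  also have "\<dots> \<le> dotp n v z"
    by (rule assms(3))
  also have "\<dots> \<le> (\<Sum>i=1..n. \<bar>v i\<bar> * \<bar>z i\<bar>)"
    unfolding dotp_def by (intro sum_mono) (metis abs_ge_self abs_mult)
  also have "\<dots> \<le> vnorm n v * vnorm n z"
    unfolding vnorm_L2 by (rule L2_set_mult_ineq)
  finally have "m * vnorm n z ^ 2 \<le> vnorm n v * vnorm n z" .
  moreover have "0 \<le> vnorm n z" "0 \<le> vnorm n v" by (simp_all add: vnorm_L2)
  ultimately show ?thesis using \<open>0 < m\<close>
    by (cases "vnorm n z = 0") (auto simp: pos_le_divide_eq power2_eq_square mult.commute)
qed

lemma vnorm_diag_le:
  assumes "0 \<le> M" "\<forall>i\<in>{1..n}. \<bar>d i\<bar> \<le> M"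
  shows "vnorm n (\<lambda>i. d i * z i) \<le> M * vnorm n z"
proof -
  have "L2_set (\<lambda>i. d i * z i) {1..n} = L2_set (\<lambda>i. \<bar>d i * z i\<bar>) {1..n}"
    by (simp add: L2_set_def)
  also have "\<dots> \<le> L2_set (\<lambda>i. M * \<bar>z i\<bar>) {1..n}"
    using assms(2) by (intro L2_set_mono) (auto simp: abs_mult mult_right_mono)
  also have "\<dots> = M * L2_set z {1..n}"
    using L2_set_right_distrib[OF assms(1), of "\<lambda>i. \<bar>z i\<bar>" "{1..n}"] by (simp add: L2_set_def)
  finally show ?thesis by (simp add: vnorm_L2)
qed

context
  fixes n :: nat and d :: "nat \<Rightarrow> real"
  assumes dpos: "\<forall>i\<in>{1..n}. 0 < d i"
begin

lemma d_pos: "i \<in> {1..n} \<Longrightarrow> 0 < d i"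
  using dpos by blast

lemma mult_dinv: "i \<in> {1..n} \<Longrightarrow> d i * dinv n d w i = w i"
  using d_pos[of i] by (simp add: dinv_def)

lemma quadD_pos: "i \<in> {1..n} \<Longrightarrow> x i \<noteq> 0 \<Longrightarrow> 0 < quadD n d x x"
  unfolding quadD_self by (intro sum_pos2[where i=i]) (simp_all add: d_pos less_imp_le)

lemma complete_square:
  "1/2 * quadD n d z z - dotp n w z
     = -1/2 * quadDinv n d w w + 1/2 * quadD n d (\<lambda>i. z i - dinv n d w i) (\<lambda>i. z i - dinv n d w i)"
proof -
  have pointwise: "1/2 * (z i * d i * z i) - w i * z i
      = -1/2 * (w i * w i / d i) + 1/2 * ((z i - dinv n d w i) * d i * (z i - dinv n d w i))"
    if "i \<in> {1..n}" for i
    using d_pos[OF that] that by (simp add: dinv_def field_simps)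
  have "(\<Sum>i=1..n. 1/2 * (z i * d i * z i) - w i * z i)
      = (\<Sum>i=1..n. -1/2 * (w i * w i / d i)
           + 1/2 * ((z i - dinv n d w i) * d i * (z i - dinv n d w i)))"
    by (rule sum.cong[OF refl], rule pointwise)
  then show ?thesis
    by (simp add: quadD_def quadDinv_def dotp_def sum_distrib_left sum_subtractf sum.distrib sum_negf)
qed

lemma quadratic_at_dinv: "1/2 * quadD n d (dinv n d w) (dinv n d w) - dotp n w (dinv n d w)
    = -1/2 * quadDinv n d w w"
  using complete_square[of "dinv n d w" w] by (simp add: quadD_def)

lemma quadratic_strict_min_at_dinv:
  assumes "z \<in> Rn n" "z \<noteq> dinv n d w"
  shows "1/2 * quadD n d (dinv n d w) (dinv n d w) - dotp n w (dinv n d w)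
           < 1/2 * quadD n d z z - dotp n w z"
proof -
  obtain i where "z i \<noteq> dinv n d w i" using assms(2) by blast
  moreover from this have "i \<in> {1..n}"
    by (rule contrapos_np) (use assms(1) dinv_Rn[of n d w] in \<open>simp add: Rn_def\<close>)
  ultimately have "0 < quadD n d (\<lambda>i. z i - dinv n d w i) (\<lambda>i. z i - dinv n d w i)"
    by (intro quadD_pos) auto
  then show ?thesis unfolding quadratic_at_dinv complete_square[of z w] by simp
qed

lemma lagr_strict_min:
  "z \<in> Rn n \<Longrightarrow> z \<noteq> dinv n d (lagr_coeff n v c lam mu)
    \<Longrightarrow> lagr n d v c (dinv n d (lagr_coeff n v c lam mu)) lam mu < lagr n d v c z lam mu"
  unfolding lagr_eq by (rule quadratic_strict_min_at_dinv)

lemma dualfun_eq_lagr_dinv: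
  "dualfun n d v c lam mu = lagr n d v c (dinv n d (lagr_coeff n v c lam mu)) lam mu"
  unfolding dualfun_def by (intro cINF_eq_strict_minimum dinv_Rn lagr_strict_min)

lemma dualfun_eq:
  "dualfun n d v c lam mu = -1/2 * quadDinv n d (lagr_coeff n v c lam mu) (lagr_coeff n v c lam mu)"
  unfolding dualfun_eq_lagr_dinv lagr_eq by (rule quadratic_at_dinv)

lemma quadD_dinv: "quadD n d (dinv n d w) (dinv n d w) = dotp n w (dinv n d w)"
  unfolding quadD_def dotp_def by (intro sum.cong refl) (simp add: mult_dinv mult.commute)

lemma dotp_dinv: "dotp n c (dinv n d w) = quadDinv n d c w"
  by (simp add: dotp_def quadDinv_def dinv_def)

lemma dinv_lagr_coeff_inj:
  assumes "k \<in> {1..n-1}" "c k \<noteq> 0"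
    and "dinv n d (lagr_coeff n v c lam mu) = dinv n d (lagr_coeff n v c lam' mu')"
  shows "lam = lam' \<and> mu = mu'"
proof -
  have coeff: "lagr_coeff n v c lam mu i = lagr_coeff n v c lam' mu' i" if "i \<in> {1..n}" for i
    using mult_dinv[OF that, of "lagr_coeff n v c lam mu"] mult_dinv[OF that, of "lagr_coeff n v c lam' mu'"]
      assms(3) by simp
  have "k \<in> {1..n}" "k \<noteq> n" "n \<in> {1..n}" using assms(1) by auto
  with coeff[of k] have "lam = lam'" using assms(2) by (simp add: lagr_coeff_def unitv_def)
  with coeff[of n] \<open>n \<in> {1..n}\<close> show ?thesis by (simp add: lagr_coeff_def unitv_def)
qed

lemma quadDinv_last_less:
  assumes "k \<in> {1..n-1}" "c k \<noteq> 0"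
  shows "(c n)^2 / d n < quadDinv n d c c"
proof -
  have "0 < d k" using assms(1) by (intro d_pos) auto
  have pos: "0 \<le> c i * c i / d i" if "i \<in> {1..n}" for i
    using d_pos[OF that] by (simp add: divide_nonneg_pos)
  have "0 < c k * c k / d k"
    using assms(2) \<open>0 < d k\<close>
    by (simp add: not_real_square_gt_zero[symmetric] del: not_real_square_gt_zero)
  then have "0 < (\<Sum>i\<in>{1..n}-{n}. c i * c i / d i)"
    using assms(1) pos by (intro sum_pos2[where i=k]) auto
  moreover have "quadDinv n d c c = c n * c n / d n + (\<Sum>i\<in>{1..n}-{n}. c i * c i / d i)"
    unfolding quadDinv_def using assms(1) by (subst sum.remove[of _ n]) auto
  ultimately show ?thesis by (simp add: power2_eq_square)
qed

text \<open>With \<open>a = c\<^sup>T D\<^sup>-\<^sup>1 c\<close> and \<open>b = c\<^sup>T D\<^sup>-\<^sup>1 v\<close>: if \<open>\<lambda> = b/a\<close> (the multiplier when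
  \<open>z\<^sub>n \<ge> 0\<close> is ignored) already gives \<open>z\<^sub>n \<ge> 0\<close>, then \<open>\<mu>* = 0\<close>; otherwise \<open>\<lambda>*\<close> is chosen so that \<open>z*\<^sub>n = 0\<close>, and the sign of
  \<open>v\<^sub>n - \<lambda>* c\<^sub>n\<close> equals the sign of \<open>v\<^sub>n - (b/a) c\<^sub>n\<close> because
  \<open>(v\<^sub>n - \<lambda>* c\<^sub>n)(a - c\<^sub>n\<^sup>2/d\<^sub>n) = a (v\<^sub>n - (b/a) c\<^sub>n)\<close>.\<close>
lemma z_star_kkt:
  fixes v c :: "nat \<Rightarrow> real"
  assumes "k \<in> {1..n-1}" "c k \<noteq> 0"
  defines "lam \<equiv> lam_star n d v c" and "mu \<equiv> mu_star n d v c" and "zs \<equiv> z_star n d v c"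
  shows "dotp n c zs = 0 \<and> 0 \<le> zs n \<and> mu * zs n = 0"
proof -
  define a b where "a = quadDinv n d c c" and "b = quadDinv n d c v"
  have n1: "1 \<le> n" and dn: "0 < d n" using assms(1) dpos by auto
  have a'pos: "0 < a - (c n)^2 / d n"
    using quadDinv_last_less[where c=c, OF assms(1,2)] by (simp add: a_def)
  moreover have "0 \<le> (c n)^2 / d n" using dn by simp
  ultimately have apos: "0 < a" by linarith
  have dotcz: "dotp n c zs = b - lam * a + mu * c n / d n"
    using n1 by (simp add: zs_def z_star_eq_dinv dotp_dinv quadDinv_lagr_coeff a_def b_def lam_def mu_def)
  have zsn: "zs n = (v n - lam * c n + mu) / d n"
    using n1 by (simp add: zs_def z_star_def unitv_def lam_def mu_def)
  show ?thesis
  proof (cases "v n - b / a * c n < 0")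
    case False
    then have lam: "lam = b / a"
      by (simp add: lam_def lam_star_def ind_A_def a_def b_def)
    with False have mu: "mu = 0" by (simp add: mu_def mu_star_def negpart_def lam_def)
    show ?thesis using apos dn False by (simp add: dotcz zsn mu lam)
  next
    case True
    then have lam: "lam = (b - c n * v n / d n) / (a - (c n)^2 / d n)"
      by (simp add: lam_def lam_star_def ind_A_def a_def b_def)
    have "(v n - lam * c n) * (a - (c n)^2 / d n) = a * (v n - b / a * c n)"
      using a'pos apos dn by (simp add: lam field_simps power2_eq_square)
    also have "\<dots> < 0" using True apos by (simp add: mult_pos_neg)
    finally have "v n - lam * c n < 0" using a'pos by (simp add: mult_less_0_iff)
    then have mu: "mu = lam * c n - v n" by (simp add: mu_def mu_star_def negpart_def lam_def)
    have "lam * (a - (c n)^2 / d n) = b - c n * v n / d n" using a'pos lam by simp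
    then show ?thesis using dn by (simp add: dotcz zsn mu field_simps power2_eq_square)
  qed
qed

end

locale kkt_point =
  fixes n :: nat and d v c :: "nat \<Rightarrow> real" and lam mu :: real and z0 :: "nat \<Rightarrow> real"
  assumes dpos: "\<forall>i\<in>{1..n}. 0 < d i" and n1: "1 \<le> n"
    and z0_eq: "z0 = dinv n d (lagr_coeff n v c lam mu)"
    and orth: "dotp n c z0 = 0" and last_nonneg: "0 \<le> z0 n"
    and mu_nonneg: "0 \<le> mu" and complementary: "mu * z0 n = 0"
begin

lemma z0_Rn: "z0 \<in> Rn n"
  by (simp add: z0_eq dinv_Rn)

lemma z0_feasible: "z0 \<in> feasible n c"
  using z0_Rn orth last_nonneg by (simp add: feasible_def)

lemma objf_z0_eq_lagr: "objf n d v z0 = lagr n d v c z0 lam mu"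
  using orth complementary by (simp add: lagr_eq_objf[OF n1])

lemma objf_z0_eq_dualfun: "objf n d v z0 = dualfun n d v c lam mu"
  unfolding dualfun_eq_lagr_dinv[OF dpos] z0_eq[symmetric] by (rule objf_z0_eq_lagr)

lemma lagr_strict_min_z0: "z \<in> Rn n \<Longrightarrow> z \<noteq> z0 \<Longrightarrow> lagr n d v c z0 lam mu < lagr n d v c z lam mu"
  unfolding z0_eq by (rule lagr_strict_min[OF dpos])

lemma primal_strict_min:
  assumes "z \<in> feasible n c" "z \<noteq> z0"
  shows "objf n d v z0 < objf n d v z"
proof -
  have z: "z \<in> Rn n" "dotp n c z = 0" "0 \<le> z n" using assms(1) by (simp_all add: feasible_def)
  have "objf n d v z0 = lagr n d v c z0 lam mu" by (rule objf_z0_eq_lagr)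
  also have "\<dots> < lagr n d v c z lam mu" using z(1) assms(2) by (rule lagr_strict_min_z0)
  also have "\<dots> \<le> objf n d v z" using z mu_nonneg by (simp add: lagr_eq_objf[OF n1])
  finally show ?thesis .
qed

lemma primal_value_eq: "primal_value n d v c = objf n d v z0"
  unfolding primal_value_def by (intro cINF_eq_strict_minimum z0_feasible primal_strict_min)

text \<open>Weak duality at \<open>z0\<close>: \<open>q(\<lambda>',\<mu>') \<le> L(z0,\<lambda>',\<mu>') = f(z0) - \<mu>' z0\<^sub>n \<le> f(z0)\<close>, strictly in the
  first step because \<open>z0\<close> is not the minimiser of \<open>L(\<cdot>,\<lambda>',\<mu>')\<close>.\<close>
lemma dual_strict_max:
  assumes "k \<in> {1..n-1}" "c k \<noteq> 0" and "0 \<le> mu'" "(lam', mu') \<noteq> (lam, mu)"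
  shows "dualfun n d v c lam' mu' < dualfun n d v c lam mu"
proof -
  have "z0 \<noteq> dinv n d (lagr_coeff n v c lam' mu')"
    using dinv_lagr_coeff_inj[where c=c and k=k and v=v and lam=lam and mu=mu and lam'=lam'
        and mu'=mu', OF dpos assms(1,2)] assms(4) z0_eq by auto
  then have "dualfun n d v c lam' mu' < lagr n d v c z0 lam' mu'"
    using lagr_strict_min[OF dpos z0_Rn] by (simp add: dualfun_eq_lagr_dinv[OF dpos])
  also have "\<dots> \<le> objf n d v z0"
    using orth last_nonneg assms(3) by (simp add: lagr_eq_objf[OF n1])
  finally show ?thesis by (simp add: objf_z0_eq_dualfun)
qed

lemma dual_value_eq:
  assumes "k \<in> {1..n-1}" "c k \<noteq> 0"
  shows "dual_value n d v c = dualfun n d v c lam mu"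
proof -
  have "(SUP p\<in>{p. 0 \<le> snd p}. dualfun n d v c (fst p) (snd p))
      = dualfun n d v c (fst (lam, mu)) (snd (lam, mu))"
  proof (rule cSUP_eq_strict_maximum)
    fix p :: "real \<times> real" assume "p \<in> {p. 0 \<le> snd p}" "p \<noteq> (lam, mu)"
    then show "dualfun n d v c (fst p) (snd p) < dualfun n d v c (fst (lam, mu)) (snd (lam, mu))"
      using dual_strict_max[OF assms, of "snd p" "fst p"] by simp
  qed (simp add: mu_nonneg)
  then show ?thesis by (simp add: dual_value_def)
qed

lemma quadD_z0: "quadD n d z0 z0 = dotp n v z0"
proof -
  have "quadD n d z0 z0 = dotp n (lagr_coeff n v c lam mu) z0"
    unfolding z0_eq by (rule quadD_dinv[OF dpos])
  also have "\<dots> = dotp n v z0"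
    using orth complementary by (simp add: dotp_lagr_coeff[OF n1])
  finally show ?thesis .
qed

lemma objf_z0: "objf n d v z0 = -1/2 * dotp n v z0"
  by (simp add: objf_def quadD_z0)

lemma primal_value_eq_dotp: "primal_value n d v c = -1/2 * dotp n v z0"
  by (simp add: primal_value_eq objf_z0)

lemma primal_value_eq_dualfun: "primal_value n d v c = dualfun n d v c lam mu"
  by (simp add: primal_value_eq objf_z0_eq_dualfun)

lemma primal_value_eq_dual_value:
  assumes "k \<in> {1..n-1}" "c k \<noteq> 0"
  shows "primal_value n d v c = dual_value n d v c"
  by (simp add: primal_value_eq_dualfun dual_value_eq[OF assms])

lemma vnorm_z0_le:
  assumes "0 < m" "\<forall>i\<in>{1..n}. m \<le> d i"
  shows "vnorm n z0 \<le> vnorm n v / m"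
  using assms quadD_z0 by (intro vnorm_le_of_quadD_le) auto

lemma multiplier_norm_le:
  assumes "0 < m" "\<forall>i\<in>{1..n}. m \<le> d i \<and> d i \<le> M"
  shows "vnorm n (\<lambda>i. lam * c i - mu * unitv n i) \<le> (1 + M / m) * vnorm n v"
proof -
  have "vnorm n (\<lambda>i. lam * c i - mu * unitv n i) = L2_set (\<lambda>i. v i + - (d i * z0 i)) {1..n}"
    unfolding vnorm_L2
    by (intro L2_set_cong refl) (simp add: z0_eq mult_dinv[OF dpos] lagr_coeff_def)
  also have "\<dots> \<le> vnorm n v + vnorm n (\<lambda>i. d i * z0 i)"
    unfolding vnorm_L2 by (rule order_trans[OF L2_set_triangle_ineq]) (simp add: L2_set_def)
  also have "vnorm n (\<lambda>i. d i * z0 i) \<le> M * (vnorm n v / m)"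
  proof -
    have "m \<le> M" using assms(2) n1 by auto
    then have "0 \<le> M" using assms(1) by linarith
    moreover have "\<forall>i\<in>{1..n}. \<bar>d i\<bar> \<le> M" using assms(2) d_pos[OF dpos] by (simp add: abs_of_pos)
    ultimately have "vnorm n (\<lambda>i. d i * z0 i) \<le> M * vnorm n z0"
      by (rule vnorm_diag_le)
    also have "\<dots> \<le> M * (vnorm n v / m)"
      using \<open>0 \<le> M\<close> vnorm_z0_le[OF assms(1)] assms(2) by (intro mult_left_mono) simp_all
    finally show ?thesis .
  qed
  finally show ?thesis using assms(1) by (simp add: field_simps)
qed

end

lemma kkt_point_star:
  assumes "\<forall>i\<in>{1..n}. 0 < d i" "k \<in> {1..n-1}" "c k \<noteq> 0"
  shows "kkt_point n d v c (lam_star n d v c) (mu_star n d v c) (z_star n d v c)"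
proof -
  have "1 \<le> n" using assms(2) by auto
  with assms(1) mu_star_nonneg z_star_eq_dinv z_star_kkt[where c=c and k=k and v=v, OF assms]
  show ?thesis unfolding kkt_point_def by blast
qed

theorem lemmaA1:
  fixes n :: nat and d v c :: "nat \<Rightarrow> real"
  assumes dpos: "\<forall>i\<in>{1..n}. d i > 0"
    and vRn: "v \<in> Rn n" and cRn: "c \<in> Rn n"
    and cnz: "\<exists>i\<in>{1..n-1}. c i \<noteq> 0"
  defines "lam \<equiv> lam_star n d v c" and "mu \<equiv> mu_star n d v c" and "zs \<equiv> z_star n d v c"
    and "dmin \<equiv> Min (d ` {1..n})" and "dmax \<equiv> Max (d ` {1..n})"
  shows
    \<comment> \<open>(a)\<close>
    "(zs \<in> feasible n c \<and>
      (\<forall>z\<in>feasible n c. z \<noteq> zs \<longrightarrow> objf n d v zs < objf n d v z) \<and>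
      vnorm n zs \<le> vnorm n v / dmin)
     \<comment> \<open>(b)\<close>
     \<and> (\<forall>lam' mu'. dualfun n d v c lam' mu' =
          - 1/2 * quadDinv n d (\<lambda>i. v i - lam' * c i + mu' * unitv n i)
                               (\<lambda>i. v i - lam' * c i + mu' * unitv n i))
     \<and> (mu \<ge> 0 \<and>
        (\<forall>lam' mu'. mu' \<ge> 0 \<and> (lam', mu') \<noteq> (lam, mu) \<longrightarrow>
           dualfun n d v c lam' mu' < dualfun n d v c lam mu) \<and>
        vnorm n (\<lambda>i. lam * c i - mu * unitv n i) \<le> (1 + dmax / dmin) * vnorm n v)
     \<comment> \<open>(c)\<close>
     \<and> primal_value n d v c = dual_value n d v c
     \<and> primal_value n d v c = - 1/2 * dotp n v zs
     \<comment> \<open>(d)\<close>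
     \<and> (zs \<in> Rn n \<and> (\<forall>z\<in>Rn n. z \<noteq> zs \<longrightarrow> lagr n d v c zs lam mu < lagr n d v c z lam mu))
     \<and> dotp n c zs = 0 \<and> zs n \<ge> 0 \<and> mu \<ge> 0 \<and> mu * zs n = 0
     \<and> (primal_value n d v c = dualfun n d v c lam mu \<and> mu \<ge> 0)"
proof -
  obtain i0 where i0: "i0 \<in> {1..n-1}" "c i0 \<noteq> 0" using cnz by blast
  then have n1: "1 \<le> n" by auto
  interpret kkt_point n d v c lam mu zs
    unfolding lam_def mu_def zs_def using dpos i0 by (rule kkt_point_star)
  have "finite (d ` {1..n})" "d ` {1..n} \<noteq> {}" using n1 by auto
  then have dmin: "0 < dmin" "\<forall>i\<in>{1..n}. dmin \<le> d i \<and> d i \<le> dmax"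
    using dpos by (auto simp: dmin_def dmax_def)
  have "\<forall>z\<in>feasible n c. z \<noteq> zs \<longrightarrow> objf n d v zs < objf n d v z"
    using primal_strict_min by blast
  moreover have "vnorm n zs \<le> vnorm n v / dmin"
    using dmin by (intro vnorm_z0_le) auto
  moreover have "\<forall>lam' mu'. dualfun n d v c lam' mu' =
      - 1/2 * quadDinv n d (\<lambda>i. v i - lam' * c i + mu' * unitv n i)
                           (\<lambda>i. v i - lam' * c i + mu' * unitv n i)"
    using dualfun_eq[OF dpos] by (simp add: lagr_coeff_def)
  moreover have "\<forall>lam' mu'. mu' \<ge> 0 \<and> (lam', mu') \<noteq> (lam, mu) \<longrightarrow>
      dualfun n d v c lam' mu' < dualfun n d v c lam mu"
    using dual_strict_max[OF i0] by blast
  moreover have "vnorm n (\<lambda>i. lam * c i - mu * unitv n i) \<le> (1 + dmax / dmin) * vnorm n v"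
    using dmin by (rule multiplier_norm_le)
  moreover have "\<forall>z\<in>Rn n. z \<noteq> zs \<longrightarrow> lagr n d v c zs lam mu < lagr n d v c z lam mu"
    using lagr_strict_min_z0 by blast
  ultimately show ?thesis
    using z0_feasible z0_Rn mu_nonneg orth last_nonneg complementary primal_value_eq_dotp
      primal_value_eq_dualfun primal_value_eq_dual_value[OF i0]
    by (intro conjI) assumption+
qed

end
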